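(* Let $\mathcal D$ be a nonempty set and let $F,G$ be planar forests decorated by $\mathcal D$. Let $\mathcal I(F,G)$ be the set of bijections $f$ from the vertex set of $F$ to the vertex set of $G$ such that: (1) for all vertices $x,y$ of $F$, $x\ge_{haut}y$ implies $f(x)\ge_{gauche}f(y)$; (2) for all vertices $x,y$ of $F$, $f(x)\ge_{haut}f(y)$ implies $x\ge_{gauche}y$; (3) for every vertex $x$ of $F$, $x$ and $f(x)$ have the same decoration. Then $(F,G)=\mathrm{card}(\mathcal I(F,G))$.
   Context: $\mathcal H^{\mathcal D}_{P,R}$ is the free associative unital $\mathbb Q$-algebra on the set of planar rooted trees (finite trees with a root, embedded in the plane, edges oriented away from the root) decorated by $\mathcal D$; its basis is the set of planar forests $t_1\cdots t_n$ ($1$ = empty forest). Coproduct: $\Delta(F)=\sum_cP^c(F)\otimes R^c(F)$ over all cuts $c=(c_i)$ of $F=t_1\cdots t_n$, each $c_i$ being the empty cut of $t_i$ ($P=1,R=t_i$), the total cut ($P=t_i,R=1$), or an admissible cut (a nonempty set of edges of $t_i$ such that every oriented path meets at most one of them, with $R^{c_i}(t_i)$ the component of the root and $P^{c_i}(t_i)$ the left-to-right planar forest of the other components); $P^c(F)=\prod_iP^{c_i}(t_i)$, $R^c(F)=\prod_iR^{c_i}(t_i)$; counit $\varepsilon(F)=0$ for $F\ne1$. $B_d^+$ grafts $t_1\cdots t_n$ (in order) on a new root decorated by $d$; $\bullet_d=B_d^+(1)$; $\gamma_d$ is linear with $\gamma_d(1)=0$, $\gamma_d(t_1\cdots t_n)=t_1\cdots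 t_{n-1}$ if $t_n=\bullet_d$, $0$ otherwise. $(\,,\,)$ denotes the unique bilinear form on $\mathcal H^{\mathcal D}_{P,R}$ with $(1,x)=\varepsilon(x)$, $(x_1x_2,y)=(x_1\otimes x_2,\Delta(y))$ and $(B_d^+(x),y)=(x,\gamma_d(y))$ for all $x,x_1,x_2,y$ and $d$ (it exists). Orders on the vertex set of a nonempty forest $F$: $x\ge_{haut}y$ iff there is an oriented path (possibly of length $0$) from $y$ to $x$. The partial order $\ge_{gauche}$ is reflexive and defined for distinct vertices recursively on the weight: write $F=t_1\cdots t_n$, $x$ a vertex of $t_i$, $y$ a vertex of $t_j$; if $i<j$ then $x\ge_{gauche}y$; if $i>j$ then $y\ge_{gauche}x$; if $i=j$ and $x$ or $y$ is the root of $t_i$, they are incomparable; if $i=j$ and neither is the root, they are compared in the forest obtained from $t_i$ by deleting its root. *)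

theory Defs
  imports Complex_Main "HOL-Library.FuncSet" "HOL-Library.Sublist"
begin

datatype 'd ptree = Node 'd "'d ptree list"

type_synonym 'd pforest = "'d ptree list"

text \<open>B_d^+ grafting a forest on a new root decorated by d is the constructor Node d;
  the empty forest [] is the unit 1; the product of forests is list concatenation.\<close>

abbreviation Bplus :: "'d \<Rightarrow> 'd pforest \<Rightarrow> 'd ptree" where
  "Bplus d F \<equiv> Node d F"

section \<open>Coproduct (as the list, with multiplicity, of all cuts)\<close>

fun list_prod :: "('a list \<times> 'b list) list list \<Rightarrow> ('a list \<times> 'b list) list" where
  "list_prod [] = [([], [])]"
| "list_prod (opts # rest) =
     concat (map (\<lambda>(p, r). map (\<lambda>(p', r'). (p @ p', r @ r')) (list_prod rest)) opts)"

text \<open>rcuts t: all cuts of t that keep the root (the empty cut and all admissible cuts),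
  given as (P^c(t), R^c(t)).  The pruned components are listed left to right.\<close>

fun rcuts :: "'d ptree \<Rightarrow> ('d pforest \<times> 'd ptree) list" where
  "rcuts (Node d ts) =
     map (\<lambda>(p, rs). (p, Node d rs))
       (list_prod (map (\<lambda>t. ([t], []) # map (\<lambda>(p, r). (p, [r])) (rcuts t)) ts))"

text \<open>All cuts of a tree: the total cut (P = t, R = 1), then the empty and admissible cuts.\<close>

definition tree_cuts :: "'d ptree \<Rightarrow> ('d pforest \<times> 'd pforest) list" where
  "tree_cuts t = ([t], []) # map (\<lambda>(p, r). (p, [r])) (rcuts t)"

text \<open>Delta(F) = sum over cuts c of P^c(F) (x) R^c(F).\<close>

definition coprod :: "'d pforest \<Rightarrow> ('d pforest \<times> 'd pforest) list" where
  "coprod F = list_prod (map tree_cuts F)"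

definition counit :: "'d pforest \<Rightarrow> rat" where
  "counit F = (if F = [] then 1 else 0)"

text \<open>gamma_d; None stands for the value 0.\<close>

definition gamma :: "'d \<Rightarrow> 'd pforest \<Rightarrow> 'd pforest option" where
  "gamma d G = (if G \<noteq> [] \<and> last G = Node d [] then Some (butlast G) else None)"

text \<open>A bilinear form is determined by its values on pairs of basis elements (forests);
  the defining identities, by bilinearity, amount to the following conditions on basis
  elements.\<close>

definition is_pairing :: "('d pforest \<Rightarrow> 'd pforest \<Rightarrow> rat) \<Rightarrow> bool" where
  "is_pairing p \<longleftrightarrow>
     (\<forall>G. p [] G = counit G) \<and>
     (\<forall>F1 F2 G. p (F1 @ F2) G = (\<Sum>(P, R) \<leftarrow> coprod G. p F1 P * p F2 R)) \<and>
     (\<forall>d F G. p [Bplus d F] G = (case gamma d G of None \<Rightarrow> 0 | Some G' \<Rightarrow> p F G'))"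

definition pairing :: "'d pforest \<Rightarrow> 'd pforest \<Rightarrow> rat" where
  "pairing = (THE p. is_pairing p)"

text \<open>A vertex of a forest t_1...t_n is addressed by a nonempty path i # p: tree t_i
  (0-based), then successive child indices.\<close>

fun is_vertex :: "'d pforest \<Rightarrow> nat list \<Rightarrow> bool" where
  "is_vertex ts [] = False"
| "is_vertex ts (i # p) =
     (i < length ts \<and> (case ts ! i of Node d cs \<Rightarrow> p = [] \<or> is_vertex cs p))"

definition vertices :: "'d pforest \<Rightarrow> nat list set" where
  "vertices F = {x. is_vertex F x}"

fun decoration :: "'d pforest \<Rightarrow> nat list \<Rightarrow> 'd" where
  "decoration ts [] = undefined"
| "decoration ts (i # p) =
     (case ts ! i of Node d cs \<Rightarrow> if p = [] then d else decoration cs p)"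

text \<open>x >=_haut y iff there is an oriented path (possibly of length 0) from y to x,
  i.e. y is an ancestor of x or equal to x.\<close>

definition haut_ge :: "'d pforest \<Rightarrow> nat list \<Rightarrow> nat list \<Rightarrow> bool" where
  "haut_ge F x y \<longleftrightarrow> x \<in> vertices F \<and> y \<in> vertices F \<and> prefix y x"

fun gauche_path_ge :: "nat list \<Rightarrow> nat list \<Rightarrow> bool" where
  "gauche_path_ge (i # p) (j # q) =
     (if i = j then p = q \<or> (p \<noteq> [] \<and> q \<noteq> [] \<and> gauche_path_ge p q) else i < j)"
| "gauche_path_ge _ _ = False"

definition gauche_ge :: "'d pforest \<Rightarrow> nat list \<Rightarrow> nat list \<Rightarrow> bool" where
  "gauche_ge F x y \<longleftrightarrow> x \<in> vertices F \<and> y \<in> vertices F \<and> gauche_path_ge x y"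

definition I_set :: "'d pforest \<Rightarrow> 'd pforest \<Rightarrow> (nat list \<Rightarrow> nat list) set" where
  "I_set F G = {f \<in> vertices F \<rightarrow>\<^sub>E vertices G.
      bij_betw f (vertices F) (vertices G) \<and>
      (\<forall>x \<in> vertices F. \<forall>y \<in> vertices F. haut_ge F x y \<longrightarrow> gauche_ge G (f x) (f y)) \<and>
      (\<forall>x \<in> vertices F. \<forall>y \<in> vertices F. haut_ge G (f x) (f y) \<longrightarrow> gauche_ge F x y) \<and>
      (\<forall>x \<in> vertices F. decoration G (f x) = decoration F x)}"

end

theory Submission
  imports Defs
begin

(* The counting function c(F, G) = card (I(F, G)) satisfies the three identities defining the
   pairing, and these identities determine a function of F uniquely, by induction on F.

   For a product F1 F2, every vertex of F1 is strictly gauche-greater than, and haut-incomparable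
   with, every vertex of F2; so by condition (2) the image A of the vertices of F1 is closed under
   taking descendants.  These sets A are exactly the pruned parts of the cuts c of G: P^c and R^c
   are isomorphic, as decorated and doubly ordered vertex sets, to A and to its complement, and f
   splits into a pair in I(F1, P^c) x I(F2, R^c).

   For B_d^+(F), every vertex is haut-above the root, so by (1) the image of the root is
   gauche-below every vertex of G: it is the root of the last tree.  By (2) no vertex lies above
   it, so that tree is the leaf decorated d, and the rest of f is an element of I(F, gamma_d(G)). *)

section \<open>Lists enumerating a set along a relation\<close>

definition rel_enum :: "('a \<Rightarrow> 'b \<Rightarrow> bool) \<Rightarrow> 'a list \<Rightarrow> 'b set \<Rightarrow> bool" where
  "rel_enum R xs S \<longleftrightarrow> (\<exists>ys. list_all2 R xs ys \<and> distinct ys \<and> set ys = S)"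

lemma rel_enum_singleton: "R x s \<Longrightarrow> rel_enum R [x] {s}"
  unfolding rel_enum_def by (intro exI [of _ "[s]"]) auto

lemma rel_enum_Cons: "R x s \<Longrightarrow> s \<notin> S \<Longrightarrow> rel_enum R xs S \<Longrightarrow> rel_enum R (x # xs) (insert s S)"
  unfolding rel_enum_def by (metis distinct.simps(2) list.simps(15) list_all2_Cons)

lemma rel_enum_map:
  assumes "rel_enum R' xs S" "inj_on k S" "\<And>a x. x \<in> S \<Longrightarrow> R' a x \<Longrightarrow> R (f a) (k x)"
  shows "rel_enum R (map f xs) (k ` S)"
proof -
  obtain ys where ys: "list_all2 R' xs ys" "distinct ys" "set ys = S"
    using assms(1) unfolding rel_enum_def by blast
  have "list_all2 R (map f xs) (map k ys)"
    using ys(1,3) assms(3) by (auto simp: list_all2_conv_all_nth)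
  moreover have "distinct (map k ys)"
    using ys assms(2) by (simp add: distinct_map)
  ultimately show ?thesis
    unfolding rel_enum_def using ys(3) by (intro exI [of _ "map k ys"]) auto
qed

lemma rel_enum_product:
  assumes "rel_enum R1 xs S1" "rel_enum R2 ys S2"
  shows "rel_enum (rel_prod R1 R2) (List.product xs ys) (S1 \<times> S2)"
proof -
  obtain us vs where "list_all2 R1 xs us" "distinct us" "set us = S1"
    and "list_all2 R2 ys vs" "distinct vs" "set vs = S2"
    using assms unfolding rel_enum_def by blast
  then show ?thesis
    unfolding rel_enum_def
    by (intro exI [of _ "List.product us vs"])
      (simp add: distinct_product rel_funD [OF rel_funD [OF product_transfer]])
qed

lemma sum_list_rel_enum:
  assumes "rel_enum R xs S" "\<And>a x. x \<in> S \<Longrightarrow> R a x \<Longrightarrow> h a = H x"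
  shows "sum_list (map h xs) = sum H S"
proof -
  obtain ys where ys: "list_all2 R xs ys" "distinct ys" "set ys = S"
    using assms(1) unfolding rel_enum_def by blast
  then have "map h xs = map H ys"
    using assms(2) by (auto simp: list_all2_conv_all_nth intro!: nth_equalityI)
  with ys show ?thesis
    by (simp add: sum_list_distinct_conv_sum_set)
qed


section \<open>Vertices of forests\<close>

definition shift :: "nat \<Rightarrow> nat list \<Rightarrow> nat list" where
  "shift n x = (case x of [] \<Rightarrow> [] | i # p \<Rightarrow> (n + i) # p)"

lemma shift_Nil [simp]: "shift n [] = []"
  by (simp add: shift_def)

lemma shift_Cons [simp]: "shift n (i # p) = (n + i) # p"
  by (simp add: shift_def)

lemma shift_eq_Nil_iff [simp]: "shift n x = [] \<longleftrightarrow> x = []"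
  by (cases x) auto

lemma Nil_eq_shift_iff [simp]: "[] = shift n x \<longleftrightarrow> x = []"
  by (cases x) auto

lemma shift_eq_Cons_iff [simp]: "shift n y = i # p \<longleftrightarrow> n \<le> i \<and> y = (i - n) # p"
  by (cases y) auto

lemma inj_shift: "inj (shift n)"
  by (rule injI) (auto simp: shift_def split: list.splits)

lemma shift_eq_shift_iff [simp]: "shift n x = shift n y \<longleftrightarrow> x = y"
  using inj_shift by (simp add: inj_eq)

lemma prefix_shift_iff [simp]: "prefix (shift n x) (shift n y) \<longleftrightarrow> prefix x y"
  by (cases x; cases y) auto

lemma gauche_path_ge_shift_iff [simp]:
  "gauche_path_ge (shift n x) (shift n y) \<longleftrightarrow> gauche_path_ge x y"
  by (cases x; cases y) auto

lemma gauche_path_ge_refl: "x \<noteq> [] \<Longrightarrow> gauche_path_ge x x"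
  by (cases x) auto

lemma gauche_path_ge_Cons_Cons_iff:
  "x \<noteq> [] \<Longrightarrow> y \<noteq> [] \<Longrightarrow> gauche_path_ge (a # x) (a # y) \<longleftrightarrow> gauche_path_ge x y"
  using gauche_path_ge_refl by auto

fun children :: "'d ptree \<Rightarrow> 'd ptree list" where
  "children (Node d cs) = cs"

fun root_label :: "'d ptree \<Rightarrow> 'd" where
  "root_label (Node d cs) = d"

lemma is_vertex_Cons_iff [simp]:
  "is_vertex ts (i # p) \<longleftrightarrow> i < length ts \<and> (p = [] \<or> is_vertex (children (ts ! i)) p)"
  by (cases "ts ! i") auto

lemma decoration_Cons_eq [simp]:
  "decoration ts (i # p) = (if p = [] then root_label (ts ! i) else decoration (children (ts ! i)) p)"
  by (cases "ts ! i") auto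

declare is_vertex.simps(2) [simp del] decoration.simps(2) [simp del]

lemma vertex_ne_Nil: "x \<in> vertices F \<Longrightarrow> x \<noteq> []"
  by (cases x) (auto simp: vertices_def)

lemma vertexE:
  assumes "x \<in> vertices F"
  obtains i p where "x = i # p" "i < length F"
  using assms by (cases x) (auto simp: vertices_def)

lemma Nil_notin_vertices [simp]: "[] \<notin> vertices F"
  using vertex_ne_Nil by blast

lemma root_in_vertices_iff [simp]: "[i] \<in> vertices F \<longleftrightarrow> i < length F"
  by (simp add: vertices_def)

lemma vertices_Nil [simp]: "vertices [] = {}"
  by (auto simp: vertices_def elim: is_vertex.elims)

lemma Cons_in_shift_image_iff: "i # p \<in> shift n ` A \<longleftrightarrow> n \<le> i \<and> (i - n) # p \<in> A"
  by (auto simp: image_iff) (metis shift_eq_Cons_iff)+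

lemma vertices_append: "vertices (F1 @ F2) = vertices F1 \<union> shift (length F1) ` vertices F2"
proof (rule set_eqI)
  fix x
  show "x \<in> vertices (F1 @ F2) \<longleftrightarrow> x \<in> vertices F1 \<union> shift (length F1) ` vertices F2"
  proof (cases x)
    case Nil
    then show ?thesis by (auto dest: vertex_ne_Nil)
  next
    case (Cons i p)
    then show ?thesis
      by (cases "i < length F1") (auto simp: vertices_def nth_append Cons_in_shift_image_iff)
  qed
qed

lemma decoration_append_left: "x \<in> vertices F1 \<Longrightarrow> decoration (F1 @ F2) x = decoration F1 x"
  by (cases x) (auto simp: vertices_def nth_append)

lemma decoration_append_right:
  "y \<in> vertices F2 \<Longrightarrow> decoration (F1 @ F2) (shift (length F1) y) = decoration F2 y"
  by (cases y) (auto simp: vertices_def nth_append)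

lemma vertices_Node: "vertices [Node d cs] = insert [0] (Cons 0 ` vertices cs)"
proof -
  have "is_vertex [Node d cs] x \<longleftrightarrow> x = [0] \<or> (\<exists>p. is_vertex cs p \<and> x = 0 # p)" for x
    by (cases x) (auto elim: is_vertex.elims)
  then show ?thesis by (auto simp: vertices_def)
qed

lemma finite_vertices: "finite (vertices F)"
proof (induction F rule: measure_induct_rule [of "size_list size"])
  case (less F)
  show ?case
  proof (cases F)
    case (Cons t ts)
    obtain d cs where t: "t = Node d cs" by (cases t)
    have "finite (vertices cs)" "finite (vertices ts)" by (auto intro: less simp: Cons t)
    then show ?thesis
      using vertices_append [of "[t]" ts] by (simp add: Cons t vertices_Node)
  qed simp
qed

definition left_of :: "nat list set \<Rightarrow> nat list set \<Rightarrow> bool" where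
  "left_of V1 V2 \<longleftrightarrow> (\<forall>x\<in>V1. \<forall>y\<in>V2.
     \<not> prefix x y \<and> \<not> prefix y x \<and> gauche_path_ge x y \<and> \<not> gauche_path_ge y x)"

lemma left_of_disjoint: "left_of V1 V2 \<Longrightarrow> V1 \<inter> V2 = {}"
  by (auto simp: left_of_def)

lemma left_of_mono: "left_of V1 V2 \<Longrightarrow> A \<subseteq> V1 \<Longrightarrow> B \<subseteq> V2 \<Longrightarrow> left_of A B"
  by (auto simp: left_of_def)

lemma left_of_vertices_append: "left_of (vertices F1) (shift (length F1) ` vertices F2)"
  unfolding left_of_def
proof (intro ballI)
  fix x y assume x: "x \<in> vertices F1" and "y \<in> shift (length F1) ` vertices F2"
  then obtain z where "z \<in> vertices F2" "y = shift (length F1) z" by blast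
  then obtain j q where "y = (length F1 + j) # q"
    by (cases z) (auto dest: vertex_ne_Nil)
  moreover obtain i p where "x = i # p" "i < length F1"
    using x by (rule vertexE)
  ultimately show "\<not> prefix x y \<and> \<not> prefix y x \<and> gauche_path_ge x y \<and> \<not> gauche_path_ge y x"
    by auto
qed


section \<open>Compatible bijections between decorated vertex sets\<close>

definition I_betw ::
  "nat list set \<Rightarrow> (nat list \<Rightarrow> 'd) \<Rightarrow> nat list set \<Rightarrow> (nat list \<Rightarrow> 'd) \<Rightarrow> (nat list \<Rightarrow> nat list) set"
where
  "I_betw V D W E = {f \<in> V \<rightarrow>\<^sub>E W. bij_betw f V W \<and>
     (\<forall>x\<in>V. \<forall>y\<in>V. prefix y x \<longrightarrow> gauche_path_ge (f x) (f y)) \<and>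
     (\<forall>x\<in>V. \<forall>y\<in>V. prefix (f y) (f x) \<longrightarrow> gauche_path_ge x y) \<and>
     (\<forall>x\<in>V. E (f x) = D x)}"

lemma I_set_eq_I_betw: "I_set F G = I_betw (vertices F) (decoration F) (vertices G) (decoration G)"
  unfolding I_set_def I_betw_def haut_ge_def gauche_ge_def
  by (rule Collect_cong) (auto simp: PiE_iff)

lemma I_betwI:
  assumes "f \<in> V \<rightarrow>\<^sub>E W" "bij_betw f V W"
    "\<And>x y. x \<in> V \<Longrightarrow> y \<in> V \<Longrightarrow> prefix y x \<Longrightarrow> gauche_path_ge (f x) (f y)"
    "\<And>x y. x \<in> V \<Longrightarrow> y \<in> V \<Longrightarrow> prefix (f y) (f x) \<Longrightarrow> gauche_path_ge x y"
    "\<And>x. x \<in> V \<Longrightarrow> E (f x) = D x"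
  shows "f \<in> I_betw V D W E"
  using assms unfolding I_betw_def by auto

lemma I_betwD:
  assumes "f \<in> I_betw V D W E"
  shows "f \<in> V \<rightarrow>\<^sub>E W" "bij_betw f V W"
    "\<And>x y. x \<in> V \<Longrightarrow> y \<in> V \<Longrightarrow> prefix y x \<Longrightarrow> gauche_path_ge (f x) (f y)"
    "\<And>x y. x \<in> V \<Longrightarrow> y \<in> V \<Longrightarrow> prefix (f y) (f x) \<Longrightarrow> gauche_path_ge x y"
    "\<And>x. x \<in> V \<Longrightarrow> E (f x) = D x"
  using assms unfolding I_betw_def by auto

lemma I_betw_surj:
  assumes "f \<in> I_betw V D W E" "w \<in> W"
  obtains x where "x \<in> V" "f x = w"
  using I_betwD(2) [OF assms(1)] assms(2) by (auto simp: bij_betw_def)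

lemma finite_I_betw: "finite V \<Longrightarrow> finite W \<Longrightarrow> finite (I_betw V D W E)"
  by (rule finite_subset [of _ "V \<rightarrow>\<^sub>E W"]) (auto simp: I_betw_def intro: finite_PiE)

lemma I_betw_restrict:
  assumes f: "f \<in> I_betw V D W E" and "U \<subseteq> V"
  shows "restrict f U \<in> I_betw U D (f ` U) E"
proof -
  have "bij_betw (restrict f U) U (f ` U)"
    using I_betwD(2) [OF f] \<open>U \<subseteq> V\<close>
    by (auto simp: bij_betw_def intro: inj_on_subset cong: inj_on_cong)
  with I_betwD(3-5) [OF f] \<open>U \<subseteq> V\<close> show ?thesis
    by (intro I_betwI) (auto simp: bij_betw_def subset_iff)
qed


definition cross_compatible :: "nat list set \<Rightarrow> nat list set \<Rightarrow> nat list set \<Rightarrow> nat list set \<Rightarrow> bool"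
where
  "cross_compatible V1 V2 W1 W2 \<longleftrightarrow> (\<forall>x\<in>V1. \<forall>y\<in>V2. \<forall>a\<in>W1. \<forall>b\<in>W2.
     (prefix y x \<longrightarrow> gauche_path_ge a b) \<and> (prefix x y \<longrightarrow> gauche_path_ge b a) \<and>
     (prefix b a \<longrightarrow> gauche_path_ge x y) \<and> (prefix a b \<longrightarrow> gauche_path_ge y x))"

lemma I_betw_glue:
  assumes g: "g \<in> I_betw V1 D W1 E" and h: "h \<in> I_betw V2 D W2 E"
    and "V1 \<inter> V2 = {}" "W1 \<inter> W2 = {}" and cross: "cross_compatible V1 V2 W1 W2"
  shows "(\<lambda>x. if x \<in> V1 then g x else h x) \<in> I_betw (V1 \<union> V2) D (W1 \<union> W2) E"
    (is "?f \<in> _")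
proof (rule I_betwI)
  have g_in: "g x \<in> W1" if "x \<in> V1" for x
    using I_betwD(1) [OF g] that by blast
  have h_in: "h x \<in> W2" if "x \<in> V2" for x
    using I_betwD(1) [OF h] that by blast
  have f2: "?f x = h x" if "x \<in> V2" for x
    using that \<open>V1 \<inter> V2 = {}\<close> by auto
  show "?f \<in> V1 \<union> V2 \<rightarrow>\<^sub>E W1 \<union> W2"
    using g_in h_in f2 I_betwD(1) [OF h] by (auto simp: PiE_iff extensional_def)
  have "bij_betw ?f V1 W1"
    using I_betwD(2) [OF g] by (rule bij_betw_cong [THEN iffD1, rotated]) simp
  moreover have "bij_betw ?f V2 W2"
    using I_betwD(2) [OF h] by (rule bij_betw_cong [THEN iffD1, rotated]) (simp add: f2)
  ultimately show "bij_betw ?f (V1 \<union> V2) (W1 \<union> W2)"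
    using \<open>W1 \<inter> W2 = {}\<close> by (rule bij_betw_combine)
  fix x y assume x: "x \<in> V1 \<union> V2" and y: "y \<in> V1 \<union> V2"
  have cross_xy: "(prefix y x \<longrightarrow> gauche_path_ge (g x) (h y)) \<and> (prefix x y \<longrightarrow> gauche_path_ge (h y) (g x)) \<and>
      (prefix (h y) (g x) \<longrightarrow> gauche_path_ge x y) \<and> (prefix (g x) (h y) \<longrightarrow> gauche_path_ge y x)"
    if "x \<in> V1" "y \<in> V2" for x y
    using cross that g_in h_in unfolding cross_compatible_def by blast
  show "prefix y x \<Longrightarrow> gauche_path_ge (?f x) (?f y)"
    using x y cross_xy [of x y] cross_xy [of y x] I_betwD(3) [OF g] I_betwD(3) [OF h] f2
    by (cases "x \<in> V1"; cases "y \<in> V1") auto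
  show "prefix (?f y) (?f x) \<Longrightarrow> gauche_path_ge x y"
    using x y cross_xy [of x y] cross_xy [of y x] I_betwD(4) [OF g] I_betwD(4) [OF h] f2
    by (cases "x \<in> V1"; cases "y \<in> V1") auto
next
  fix x assume "x \<in> V1 \<union> V2"
  then show "E (?f x) = D x"
    using I_betwD(5) [OF g] I_betwD(5) [OF h] by auto
qed

lemma card_I_betw_glue:
  assumes "V1 \<inter> V2 = {}" "W1 \<inter> W2 = {}" "cross_compatible V1 V2 W1 W2"
  shows "card {f \<in> I_betw (V1 \<union> V2) D (W1 \<union> W2) E. f ` V1 = W1} =
    card (I_betw V1 D W1 E) * card (I_betw V2 D W2 E)"
    (is "card ?I = card ?I1 * card ?I2")
proof -
  let ?glue = "\<lambda>(g, h) x. if x \<in> V1 then g x else h x"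
  let ?split = "\<lambda>f. (restrict f V1, restrict f V2)"
  have "bij_betw ?split ?I (?I1 \<times> ?I2)"
  proof (rule bij_betw_byWitness [where f' = ?glue])
    show "\<forall>f\<in>?I. ?glue (?split f) = f"
      by (auto simp: I_betw_def PiE_iff extensional_def)
    show "\<forall>p\<in>?I1 \<times> ?I2. ?split (?glue p) = p"
      using assms(1) by (auto simp: I_betw_def PiE_iff extensional_def fun_eq_iff)
    show "?split ` ?I \<subseteq> ?I1 \<times> ?I2"
    proof (rule image_subsetI)
      fix f assume "f \<in> ?I"
      then have f: "f \<in> I_betw (V1 \<union> V2) D (W1 \<union> W2) E" and "f ` V1 = W1" by auto
      have "f ` ((V1 \<union> V2) - V1) = f ` (V1 \<union> V2) - f ` V1"
        using I_betwD(2) [OF f] by (intro inj_on_image_set_diff) (auto simp: bij_betw_def)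
      moreover have "(V1 \<union> V2) - V1 = V2"
        using assms(1) by blast
      ultimately have "f ` V2 = (W1 \<union> W2) - W1"
        using I_betwD(2) [OF f] \<open>f ` V1 = W1\<close> by (simp add: bij_betw_def)
      then have "f ` V2 = W2"
        using assms(2) by blast
      then show "?split f \<in> ?I1 \<times> ?I2"
        using I_betw_restrict [OF f, of V1] I_betw_restrict [OF f, of V2] \<open>f ` V1 = W1\<close> by simp
    qed
    show "?glue ` (?I1 \<times> ?I2) \<subseteq> ?I"
    proof (rule image_subsetI)
      fix p assume "p \<in> ?I1 \<times> ?I2"
      then obtain g h where p: "p = (g, h)" and g: "g \<in> ?I1" and h: "h \<in> ?I2" by blast
      have "?glue p ` V1 = W1"
        using I_betwD(2) [OF g] p by (simp add: bij_betw_def)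
      with I_betw_glue [OF g h assms] p show "?glue p \<in> ?I" by simp
    qed
  qed
  then show ?thesis
    by (simp add: bij_betw_same_card card_cartesian_product)
qed


definition haut_upsets :: "nat list set \<Rightarrow> nat list set set" where
  "haut_upsets W = {A. A \<subseteq> W \<and> (\<forall>a\<in>A. \<forall>b\<in>W - A. \<not> prefix a b)}"

lemma finite_haut_upsets: "finite W \<Longrightarrow> finite (haut_upsets W)"
  by (rule finite_subset [of _ "Pow W"]) (auto simp: haut_upsets_def)

lemma image_in_haut_upsets:
  assumes f: "f \<in> I_betw (V1 \<union> V2) D W E"
    and not_gauche: "\<And>x y. x \<in> V1 \<Longrightarrow> y \<in> V2 \<Longrightarrow> \<not> gauche_path_ge y x"
  shows "f ` V1 \<in> haut_upsets W"
proof -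
  have "\<not> prefix (f x) b" if x: "x \<in> V1" and b: "b \<in> W - f ` V1" for x b
  proof
    assume "prefix (f x) b"
    obtain y where "y \<in> V2" "b = f y"
      using b I_betwD(2) [OF f] by (auto simp: bij_betw_def)
    with \<open>prefix (f x) b\<close> x have "gauche_path_ge y x"
      using I_betwD(4) [OF f, of y x] by blast
    with not_gauche [OF x \<open>y \<in> V2\<close>] show False ..
  qed
  moreover have "f ` V1 \<subseteq> W"
    using I_betwD(2) [OF f] by (auto simp: bij_betw_def)
  ultimately show ?thesis
    by (auto simp: haut_upsets_def)
qed

lemma card_I_betw_Un:
  assumes "finite V1" "finite V2" "finite W" and left: "left_of V1 V2"
  shows "card (I_betw (V1 \<union> V2) D W E) =
    (\<Sum>A\<in>haut_upsets W. card (I_betw V1 D A E) * card (I_betw V2 D (W - A) E))"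
proof -
  let ?I = "I_betw (V1 \<union> V2) D W E"
  have "f ` V1 \<in> haut_upsets W" if "f \<in> ?I" for f
    using that by (rule image_in_haut_upsets) (use left in \<open>simp add: left_of_def\<close>)
  then have "?I = (\<Union>A\<in>haut_upsets W. {f \<in> ?I. f ` V1 = A})"
    by (intro equalityI subsetI) auto
  then have "card ?I = card (\<Union>A\<in>haut_upsets W. {f \<in> ?I. f ` V1 = A})"
    by simp
  also have "\<dots> = (\<Sum>A\<in>haut_upsets W. card {f \<in> ?I. f ` V1 = A})"
    using assms(1-3) by (intro card_UN_disjoint) (auto simp: finite_haut_upsets finite_I_betw)
  also have "\<dots> = (\<Sum>A\<in>haut_upsets W. card (I_betw V1 D A E) * card (I_betw V2 D (W - A) E))"
  proof (rule sum.cong [OF refl])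
    fix A assume A: "A \<in> haut_upsets W"
    then have W: "A \<union> (W - A) = W"
      by (auto simp: haut_upsets_def)
    have "V1 \<inter> V2 = {}"
      using left by (rule left_of_disjoint)
    moreover have "cross_compatible V1 V2 A (W - A)"
      using left A by (auto simp: left_of_def cross_compatible_def haut_upsets_def)
    ultimately show "card {f \<in> ?I. f ` V1 = A} = card (I_betw V1 D A E) * card (I_betw V2 D (W - A) E)"
      using card_I_betw_glue [of V1 V2 A "W - A" D E] W by simp
  qed
  finally show ?thesis .
qed


section \<open>Isomorphisms of decorated vertex sets\<close>

definition is_vertex_iso ::
  "(nat list \<Rightarrow> nat list) \<Rightarrow> nat list set \<Rightarrow> (nat list \<Rightarrow> 'd) \<Rightarrow> nat list set \<Rightarrow> (nat list \<Rightarrow> 'd) \<Rightarrow> bool"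
where
  "is_vertex_iso \<phi> V D W E \<longleftrightarrow> bij_betw \<phi> V W \<and>
     (\<forall>x\<in>V. \<forall>y\<in>V. (prefix (\<phi> x) (\<phi> y) \<longleftrightarrow> prefix x y) \<and>
        (gauche_path_ge (\<phi> x) (\<phi> y) \<longleftrightarrow> gauche_path_ge x y)) \<and>
     (\<forall>x\<in>V. E (\<phi> x) = D x)"

definition vertex_iso :: "nat list set \<Rightarrow> (nat list \<Rightarrow> 'd) \<Rightarrow> nat list set \<Rightarrow> (nat list \<Rightarrow> 'd) \<Rightarrow> bool"
where
  "vertex_iso V D W E \<longleftrightarrow> (\<exists>\<phi>. is_vertex_iso \<phi> V D W E)"

lemma is_vertex_isoI:
  assumes "bij_betw \<phi> V W"
    and "\<And>x y. x \<in> V \<Longrightarrow> y \<in> V \<Longrightarrow> prefix (\<phi> x) (\<phi> y) \<longleftrightarrow> prefix x y"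
    and "\<And>x y. x \<in> V \<Longrightarrow> y \<in> V \<Longrightarrow> gauche_path_ge (\<phi> x) (\<phi> y) \<longleftrightarrow> gauche_path_ge x y"
    and "\<And>x. x \<in> V \<Longrightarrow> E (\<phi> x) = D x"
  shows "is_vertex_iso \<phi> V D W E"
  unfolding is_vertex_iso_def using assms by blast

lemma is_vertex_isoD:
  assumes "is_vertex_iso \<phi> V D W E"
  shows "bij_betw \<phi> V W" "\<And>x. x \<in> V \<Longrightarrow> \<phi> x \<in> W"
    and "\<And>x y. x \<in> V \<Longrightarrow> y \<in> V \<Longrightarrow> prefix (\<phi> x) (\<phi> y) \<longleftrightarrow> prefix x y"
    and "\<And>x y. x \<in> V \<Longrightarrow> y \<in> V \<Longrightarrow> gauche_path_ge (\<phi> x) (\<phi> y) \<longleftrightarrow> gauche_path_ge x y"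
    and "\<And>x. x \<in> V \<Longrightarrow> E (\<phi> x) = D x"
  using assms unfolding is_vertex_iso_def bij_betw_def by blast+

lemma vertex_isoI: "is_vertex_iso \<phi> V D W E \<Longrightarrow> vertex_iso V D W E"
  unfolding vertex_iso_def by blast

lemma vertex_isoE:
  assumes "vertex_iso V D W E"
  obtains \<phi> where "is_vertex_iso \<phi> V D W E"
  using assms unfolding vertex_iso_def by blast

lemma vertex_iso_refl: "vertex_iso V D V D"
  by (rule vertex_isoI [of id]) (simp add: is_vertex_iso_def)

lemma vertex_iso_empty: "vertex_iso {} D {} E"
  by (rule vertex_isoI [of id]) (simp add: is_vertex_iso_def)

lemma is_vertex_iso_inv_into:
  assumes \<phi>: "is_vertex_iso \<phi> V D W E"
  shows "is_vertex_iso (inv_into V \<phi>) W E V D"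
proof -
  let ?\<psi> = "inv_into V \<phi>"
  have \<psi>: "bij_betw ?\<psi> W V"
    using is_vertex_isoD(1) [OF \<phi>] by (rule bij_betw_inv_into)
  have \<phi>\<psi>: "\<phi> (?\<psi> y) = y" and \<psi>_in: "?\<psi> y \<in> V" if "y \<in> W" for y
    using is_vertex_isoD(1) [OF \<phi>] that by (auto simp: bij_betw_def f_inv_into_f inv_into_into)
  show ?thesis
  proof (rule is_vertex_isoI [OF \<psi>])
    fix x y assume "x \<in> W" "y \<in> W"
    then show "prefix (?\<psi> x) (?\<psi> y) \<longleftrightarrow> prefix x y"
      "gauche_path_ge (?\<psi> x) (?\<psi> y) \<longleftrightarrow> gauche_path_ge x y"
      using is_vertex_isoD(3,4) [OF \<phi>, of "?\<psi> x" "?\<psi> y"] \<phi>\<psi> \<psi>_in by simp_all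
  next
    fix x assume "x \<in> W"
    then show "D (?\<psi> x) = E x"
      using is_vertex_isoD(5) [OF \<phi>, of "?\<psi> x"] \<phi>\<psi> \<psi>_in by simp
  qed
qed

lemma is_vertex_iso_comp:
  assumes \<phi>: "is_vertex_iso \<phi> U C V D" and \<psi>: "is_vertex_iso \<psi> V D W E"
  shows "is_vertex_iso (\<psi> \<circ> \<phi>) U C W E"
  using bij_betw_trans [OF is_vertex_isoD(1) [OF \<phi>] is_vertex_isoD(1) [OF \<psi>]]
    is_vertex_isoD(2-5) [OF \<phi>] is_vertex_isoD(3-5) [OF \<psi>]
  by (intro is_vertex_isoI) auto

lemma vertex_iso_sym: "vertex_iso V D W E \<Longrightarrow> vertex_iso W E V D"
  by (metis vertex_isoE vertex_isoI is_vertex_iso_inv_into)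

lemma vertex_iso_trans: "vertex_iso U C V D \<Longrightarrow> vertex_iso V D W E \<Longrightarrow> vertex_iso U C W E"
  by (metis vertex_isoE vertex_isoI is_vertex_iso_comp)

lemma vertex_iso_cong:
  assumes "vertex_iso V D W E" "\<And>x. x \<in> V \<Longrightarrow> D x = D' x" "\<And>y. y \<in> W \<Longrightarrow> E y = E' y"
  shows "vertex_iso V D' W E'"
proof -
  obtain \<phi> where \<phi>: "is_vertex_iso \<phi> V D W E"
    using assms(1) by (rule vertex_isoE)
  then have "is_vertex_iso \<phi> V D' W E'"
    using is_vertex_isoD [OF \<phi>] assms(2,3) by (intro is_vertex_isoI) auto
  then show ?thesis
    by (rule vertex_isoI)
qed

lemma transport_in_I_betw:
  assumes \<phi>: "is_vertex_iso \<phi> V' D' V D" and \<psi>: "is_vertex_iso \<psi> W E W' E'"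
    and f: "f \<in> I_betw V D W E"
  shows "restrict (\<psi> \<circ> f \<circ> \<phi>) V' \<in> I_betw V' D' W' E'"
proof -
  have f_in: "f x \<in> W" if "x \<in> V" for x
    using I_betwD(1) [OF f] that by blast
  have "bij_betw (\<psi> \<circ> f \<circ> \<phi>) V' W'"
    using is_vertex_isoD(1) [OF \<phi>] I_betwD(2) [OF f] is_vertex_isoD(1) [OF \<psi>]
    by (auto intro: bij_betw_trans)
  then have bij: "bij_betw (restrict (\<psi> \<circ> f \<circ> \<phi>) V') V' W'"
    by (rule bij_betw_cong [THEN iffD1, rotated]) simp
  show ?thesis
  proof (rule I_betwI [OF _ bij])
    fix x y assume "x \<in> V'" "y \<in> V'" "prefix (restrict (\<psi> \<circ> f \<circ> \<phi>) V' y) (restrict (\<psi> \<circ> f \<circ> \<phi>) V' x)"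
    then have "gauche_path_ge (\<phi> x) (\<phi> y)"
      using I_betwD(4) [OF f] is_vertex_isoD(2) [OF \<phi>] f_in is_vertex_isoD(3) [OF \<psi>] by simp
    then show "gauche_path_ge x y"
      using is_vertex_isoD(4) [OF \<phi>] \<open>x \<in> V'\<close> \<open>y \<in> V'\<close> by simp
  qed (use bij I_betwD(3,5) [OF f] f_in is_vertex_isoD(2,3,5) [OF \<phi>] is_vertex_isoD(4,5) [OF \<psi>]
      in \<open>auto simp: bij_betw_def\<close>)
qed

lemma card_I_betw_le_iso:
  assumes "vertex_iso V' D' V D" "vertex_iso W E W' E'" "finite V'" "finite W'"
  shows "card (I_betw V D W E) \<le> card (I_betw V' D' W' E')"
proof -
  obtain \<phi> \<psi> where \<phi>: "is_vertex_iso \<phi> V' D' V D" and \<psi>: "is_vertex_iso \<psi> W E W' E'"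
    using assms(1,2) by (meson vertex_isoE)
  let ?transport = "\<lambda>f. restrict (\<psi> \<circ> f \<circ> \<phi>) V'"
  have "inj_on ?transport (I_betw V D W E)"
  proof (rule inj_onI)
    fix f g assume f: "f \<in> I_betw V D W E" and g: "g \<in> I_betw V D W E"
      and eq: "?transport f = ?transport g"
    show "f = g"
    proof (rule extensionalityI [of _ V])
      fix x assume "x \<in> V"
      then obtain x' where "x' \<in> V'" "x = \<phi> x'"
        using is_vertex_isoD(1) [OF \<phi>] by (auto simp: bij_betw_def)
      with eq have "\<psi> (f x) = \<psi> (g x)"
        by (metis comp_apply restrict_apply')
      moreover have "f x \<in> W" "g x \<in> W"
        using I_betwD(1) f g \<open>x \<in> V\<close> by blast+
      ultimately show "f x = g x"
        using is_vertex_isoD(1) [OF \<psi>] by (auto simp: bij_betw_def dest: inj_onD)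
    qed (use f g in \<open>auto simp: I_betw_def PiE_iff\<close>)
  qed
  moreover have "?transport ` I_betw V D W E \<subseteq> I_betw V' D' W' E'"
    using transport_in_I_betw [OF \<phi> \<psi>] by blast
  ultimately show ?thesis
    using assms(3,4) by (intro card_inj_on_le finite_I_betw)
qed

lemma card_I_betw_iso:
  assumes "vertex_iso V D V' D'" "vertex_iso W E W' E'" "finite V" "finite W"
  shows "card (I_betw V D W E) = card (I_betw V' D' W' E')"
proof -
  have "finite V'" "finite W'"
    using assms by (auto simp: vertex_iso_def is_vertex_iso_def bij_betw_finite)
  with assms show ?thesis
    by (intro antisym card_I_betw_le_iso) (auto intro: vertex_iso_sym)
qed

lemma vertex_iso_Un:
  assumes "vertex_iso V1 D W1 E" "vertex_iso V2 D W2 E" "V1 \<inter> V2 = {}" "W1 \<inter> W2 = {}"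
    and same_position: "\<And>x y a b. x \<in> V1 \<Longrightarrow> y \<in> V2 \<Longrightarrow> a \<in> W1 \<Longrightarrow> b \<in> W2 \<Longrightarrow>
      (prefix x y \<longleftrightarrow> prefix a b) \<and> (prefix y x \<longleftrightarrow> prefix b a) \<and>
      (gauche_path_ge x y \<longleftrightarrow> gauche_path_ge a b) \<and> (gauche_path_ge y x \<longleftrightarrow> gauche_path_ge b a)"
  shows "vertex_iso (V1 \<union> V2) D (W1 \<union> W2) E"
proof -
  obtain \<phi> \<psi> where \<phi>: "is_vertex_iso \<phi> V1 D W1 E" and \<psi>: "is_vertex_iso \<psi> V2 D W2 E"
    using assms(1,2) by (meson vertex_isoE)
  let ?\<chi> = "\<lambda>x. if x \<in> V1 then \<phi> x else \<psi> x"
  have \<chi>2: "?\<chi> x = \<psi> x" if "x \<in> V2" for x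
    using that \<open>V1 \<inter> V2 = {}\<close> by auto
  have "bij_betw ?\<chi> V1 W1"
    using is_vertex_isoD(1) [OF \<phi>] by (rule bij_betw_cong [THEN iffD1, rotated]) simp
  moreover have "bij_betw ?\<chi> V2 W2"
    using is_vertex_isoD(1) [OF \<psi>] by (rule bij_betw_cong [THEN iffD1, rotated]) (simp add: \<chi>2)
  ultimately have bij: "bij_betw ?\<chi> (V1 \<union> V2) (W1 \<union> W2)"
    using \<open>W1 \<inter> W2 = {}\<close> by (rule bij_betw_combine)
  have "(prefix (?\<chi> x) (?\<chi> y) \<longleftrightarrow> prefix x y) \<and>
      (gauche_path_ge (?\<chi> x) (?\<chi> y) \<longleftrightarrow> gauche_path_ge x y)"
    if "x \<in> V1 \<union> V2" "y \<in> V1 \<union> V2" for x y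
    using that same_position [of x y "\<phi> x" "\<psi> y"] same_position [of y x "\<phi> y" "\<psi> x"]
      is_vertex_isoD(2-4) [OF \<phi>] is_vertex_isoD(2-4) [OF \<psi>] \<chi>2
    by (cases "x \<in> V1"; cases "y \<in> V1") auto
  then have "is_vertex_iso ?\<chi> (V1 \<union> V2) D (W1 \<union> W2) E"
    using is_vertex_isoD(5) [OF \<phi>] is_vertex_isoD(5) [OF \<psi>] \<chi>2 by (intro is_vertex_isoI [OF bij]) auto
  then show ?thesis
    by (rule vertex_isoI)
qed

lemma vertex_iso_Un_left_of:
  assumes "vertex_iso V1 D W1 E" "vertex_iso V2 D W2 E" "left_of V1 V2" "left_of W1 W2"
  shows "vertex_iso (V1 \<union> V2) D (W1 \<union> W2) E"
  using assms by (intro vertex_iso_Un left_of_disjoint) (auto simp: left_of_def)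

lemma vertex_iso_image_Cons:
  assumes "\<And>v. v \<in> V \<Longrightarrow> v \<noteq> [] \<and> E (i # v) = D v"
  shows "vertex_iso V D (Cons i ` V) E"
  using assms gauche_path_ge_Cons_Cons_iff
  by (intro vertex_isoI [of "Cons i"] is_vertex_isoI) (auto simp: bij_betw_def)

lemma vertex_iso_image_shift:
  assumes "\<And>v. v \<in> V \<Longrightarrow> E (shift n v) = D v"
  shows "vertex_iso V D (shift n ` V) E"
  using assms inj_shift
  by (intro vertex_isoI [of "shift n"] is_vertex_isoI) (auto simp: bij_betw_def inj_on_def)

lemma vertex_iso_graft:
  assumes iso: "vertex_iso V D W E" and "[] \<notin> V" "[] \<notin> W"
    and "D' [0] = E' [0]" "\<And>v. v \<in> V \<Longrightarrow> D' (0 # v) = D v" "\<And>w. w \<in> W \<Longrightarrow> E' (0 # w) = E w"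
  shows "vertex_iso (insert [0] (Cons 0 ` V)) D' (insert [0] (Cons 0 ` W)) E'"
proof -
  have "vertex_iso (Cons 0 ` V) D' V D"
    using assms by (metis vertex_iso_image_Cons vertex_iso_sym)
  moreover have "vertex_iso W E (Cons 0 ` W) E'"
    using assms by (metis vertex_iso_image_Cons)
  ultimately have "vertex_iso (Cons 0 ` V) D' (Cons 0 ` W) E'"
    using iso by (blast intro: vertex_iso_trans)
  moreover have "vertex_iso {[0]} D' {[0]} E'"
    using \<open>D' [0] = E' [0]\<close> by (intro vertex_isoI [of id] is_vertex_isoI) auto
  ultimately have "vertex_iso ({[0]} \<union> Cons 0 ` V) D' ({[0]} \<union> Cons 0 ` W) E'"
    using \<open>[] \<notin> V\<close> \<open>[] \<notin> W\<close> by (intro vertex_iso_Un) (auto simp: neq_Nil_conv)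
  then show ?thesis
    by simp
qed

lemma vertex_iso_append_left:
  "U \<subseteq> vertices F1 \<Longrightarrow> vertex_iso U (decoration F1) U (decoration (F1 @ F2))"
  by (rule vertex_iso_cong [OF vertex_iso_refl]) (auto simp: decoration_append_left)

lemma vertex_iso_append_right:
  "U \<subseteq> vertices F2 \<Longrightarrow> vertex_iso U (decoration F2) (shift (length F1) ` U) (decoration (F1 @ F2))"
  by (rule vertex_iso_image_shift) (auto simp: decoration_append_right)

lemma vertex_iso_append:
  assumes "vertex_iso (vertices F1) (decoration F1) W1 E" "vertex_iso (vertices F2) (decoration F2) W2 E"
    and "left_of W1 W2"
  shows "vertex_iso (vertices (F1 @ F2)) (decoration (F1 @ F2)) (W1 \<union> W2) E"
  unfolding vertices_append
proof (rule vertex_iso_Un_left_of)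
  show "vertex_iso (vertices F1) (decoration (F1 @ F2)) W1 E"
    using vertex_iso_append_left [OF subset_refl, THEN vertex_iso_sym] assms(1) by (rule vertex_iso_trans)
  show "vertex_iso (shift (length F1) ` vertices F2) (decoration (F1 @ F2)) W2 E"
    using vertex_iso_append_right [OF subset_refl, THEN vertex_iso_sym] assms(2) by (rule vertex_iso_trans)
qed (use assms(3) left_of_vertices_append in auto)


section \<open>Cuts as up-sets of vertices\<close>

lemma haut_upsets_Un:
  assumes "left_of X Y"
  shows "haut_upsets (X \<union> Y) = (\<lambda>(A, B). A \<union> B) ` (haut_upsets X \<times> haut_upsets Y)"
proof (intro equalityI subsetI)
  fix A assume A: "A \<in> haut_upsets (X \<union> Y)"
  then have "A \<inter> X \<in> haut_upsets X" "A \<inter> Y \<in> haut_upsets Y" "A = (A \<inter> X) \<union> (A \<inter> Y)"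
    by (auto simp: haut_upsets_def)
  then show "A \<in> (\<lambda>(A, B). A \<union> B) ` (haut_upsets X \<times> haut_upsets Y)"
    by (intro image_eqI [of _ _ "(A \<inter> X, A \<inter> Y)"]) auto
qed (use assms in \<open>auto simp: haut_upsets_def left_of_def\<close>)

lemma haut_upsets_image:
  assumes "inj_on h X" "\<And>x y. x \<in> X \<Longrightarrow> y \<in> X \<Longrightarrow> prefix (h x) (h y) \<longleftrightarrow> prefix x y"
  shows "haut_upsets (h ` X) = image h ` haut_upsets X"
proof (intro equalityI subsetI)
  fix A assume A: "A \<in> haut_upsets (h ` X)"
  let ?B = "{x \<in> X. h x \<in> A}"
  have "A = h ` ?B"
    using A by (auto simp: haut_upsets_def)
  moreover have "?B \<in> haut_upsets X"
    using A assms by (auto simp: haut_upsets_def) (metis DiffI imageI)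
  ultimately show "A \<in> image h ` haut_upsets X"
    by blast
next
  fix A assume "A \<in> image h ` haut_upsets X"
  then show "A \<in> haut_upsets (h ` X)"
    using assms by (auto simp: haut_upsets_def) (metis DiffI inj_on_image_mem_iff subsetD)
qed

lemma haut_upsets_graft:
  assumes "[] \<notin> V"
  shows "haut_upsets (insert [0] (Cons 0 ` V)) =
    insert (insert [0] (Cons 0 ` V)) (haut_upsets (Cons 0 ` V))"
proof (intro equalityI subsetI)
  fix A assume A: "A \<in> haut_upsets (insert [0] (Cons 0 ` V))"
  show "A \<in> insert (insert [0] (Cons 0 ` V)) (haut_upsets (Cons 0 ` V))"
  proof (cases "[0] \<in> A")
    case True
    have "0 # v \<in> A" if "v \<in> V" for v
    proof (rule ccontr)
      assume "0 # v \<notin> A"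
      with that have "0 # v \<in> insert [0] (Cons 0 ` V) - A" by blast
      with A True have "\<not> prefix [0] (0 # v)"
        unfolding haut_upsets_def by blast
      then show False by simp
    qed
    with A True show ?thesis
      by (auto simp: haut_upsets_def)
  qed (use A in \<open>auto simp: haut_upsets_def\<close>)
qed (use assms in \<open>auto simp: haut_upsets_def\<close>)

lemma haut_upsets_vertices_append:
  "haut_upsets (vertices (F1 @ F2)) =
    (\<lambda>(A, B). A \<union> shift (length F1) ` B) ` (haut_upsets (vertices F1) \<times> haut_upsets (vertices F2))"
proof -
  let ?g = "image (shift (length F1))"
  have "haut_upsets (shift (length F1) ` vertices F2) = ?g ` haut_upsets (vertices F2)"
    using inj_shift by (intro haut_upsets_image) (auto simp: inj_on_def)
  then have "haut_upsets (vertices F1) \<times> haut_upsets (shift (length F1) ` vertices F2) =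
      map_prod id ?g ` (haut_upsets (vertices F1) \<times> haut_upsets (vertices F2))"
    by (simp add: map_prod_surj_on)
  then show ?thesis
    unfolding vertices_append haut_upsets_Un [OF left_of_vertices_append]
    by (simp add: image_comp comp_def case_prod_beta)
qed

lemma inj_on_haut_upsets_vertices_append:
  "inj_on (\<lambda>(A, B). A \<union> shift (length F1) ` B) (haut_upsets (vertices F1) \<times> haut_upsets (vertices F2))"
proof (rule inj_onI, clarify)
  fix A B A' B' assume "A \<in> haut_upsets (vertices F1)" "A' \<in> haut_upsets (vertices F1)"
    "B \<in> haut_upsets (vertices F2)" "B' \<in> haut_upsets (vertices F2)"
    and eq: "A \<union> shift (length F1) ` B = A' \<union> shift (length F1) ` B'"
  then have "A \<subseteq> vertices F1" "A' \<subseteq> vertices F1"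
    "shift (length F1) ` B \<subseteq> shift (length F1) ` vertices F2"
    "shift (length F1) ` B' \<subseteq> shift (length F1) ` vertices F2"
    by (auto simp: haut_upsets_def)
  moreover have "vertices F1 \<inter> shift (length F1) ` vertices F2 = {}"
    using left_of_vertices_append by (rule left_of_disjoint)
  ultimately have "A = (A \<union> shift (length F1) ` B) \<inter> vertices F1"
    "A' = (A' \<union> shift (length F1) ` B') \<inter> vertices F1"
    "shift (length F1) ` B = (A \<union> shift (length F1) ` B) - vertices F1"
    "shift (length F1) ` B' = (A' \<union> shift (length F1) ` B') - vertices F1"
    by blast+
  with eq have "A = A'" "shift (length F1) ` B = shift (length F1) ` B'"
    by simp_all
  then show "A = A' \<and> B = B'"
    using inj_shift by (simp add: inj_image_eq_iff)
qed


definition cut_prunes :: "'d pforest \<Rightarrow> 'd pforest \<times> 'd pforest \<Rightarrow> nat list set \<Rightarrow> bool" where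
  "cut_prunes G c A \<longleftrightarrow>
     vertex_iso (vertices (fst c)) (decoration (fst c)) A (decoration G) \<and>
     vertex_iso (vertices (snd c)) (decoration (snd c)) (vertices G - A) (decoration G)"

lemma cut_prunes_total: "cut_prunes [t] ([t], []) (vertices [t])"
  by (simp add: cut_prunes_def vertex_iso_refl vertex_iso_empty)

lemma cut_prunes_graft:
  assumes cut: "cut_prunes cs (p, rs) A" and "A \<subseteq> vertices cs"
  shows "cut_prunes [Node d cs] (p, [Node d rs]) (Cons 0 ` A)"
proof -
  have "vertex_iso A (decoration cs) (Cons 0 ` A) (decoration [Node d cs])"
    using \<open>A \<subseteq> vertices cs\<close> by (intro vertex_iso_image_Cons) (auto dest: vertex_ne_Nil)
  with cut have pruned: "vertex_iso (vertices p) (decoration p) (Cons 0 ` A) (decoration [Node d cs])"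
    by (auto simp: cut_prunes_def intro: vertex_iso_trans)
  have "vertex_iso (insert [0] (Cons 0 ` vertices rs)) (decoration [Node d rs])
      (insert [0] (Cons 0 ` (vertices cs - A))) (decoration [Node d cs])"
    using cut
    by (intro vertex_iso_graft [where D = "decoration rs" and E = "decoration cs"])
      (auto simp: cut_prunes_def dest: vertex_ne_Nil)
  moreover have "insert [0] (Cons 0 ` (vertices cs - A)) = vertices [Node d cs] - Cons 0 ` A"
    using \<open>A \<subseteq> vertices cs\<close> by (auto simp: vertices_Node dest: vertex_ne_Nil)
  ultimately show ?thesis
    using pruned by (simp add: cut_prunes_def vertices_Node)
qed

lemma cut_prunes_append:
  assumes cut1: "cut_prunes F1 (P1, R1) A" and cut2: "cut_prunes F2 (P2, R2) B"
    and "A \<subseteq> vertices F1" "B \<subseteq> vertices F2"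
  shows "cut_prunes (F1 @ F2) (P1 @ P2, R1 @ R2) (A \<union> shift (length F1) ` B)"
proof -
  let ?E = "decoration (F1 @ F2)" and ?n = "length F1"
  have left: "left_of U (shift ?n ` U')" if "U \<subseteq> vertices F1" "U' \<subseteq> vertices F2" for U U'
    by (rule left_of_mono [OF left_of_vertices_append]) (use that in auto)
  have "vertex_iso (vertices (P1 @ P2)) (decoration (P1 @ P2)) (A \<union> shift ?n ` B) ?E"
    using cut1 cut2 assms(3,4) vertex_iso_append_left [of _ F1 F2] vertex_iso_append_right [of _ F2 F1] left
    by (intro vertex_iso_append) (auto simp: cut_prunes_def intro: vertex_iso_trans)
  moreover have "vertex_iso (vertices (R1 @ R2)) (decoration (R1 @ R2))
      ((vertices F1 - A) \<union> shift ?n ` (vertices F2 - B)) ?E"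
    using cut1 cut2 vertex_iso_append_left [of _ F1 F2] vertex_iso_append_right [of _ F2 F1] left
    by (intro vertex_iso_append) (auto simp: cut_prunes_def intro: vertex_iso_trans)
  moreover have "(vertices F1 - A) \<union> shift ?n ` (vertices F2 - B) = vertices (F1 @ F2) - (A \<union> shift ?n ` B)"
    using left_of_disjoint [OF left_of_vertices_append, of F1 F2] assms(3,4)
    by (auto simp: vertices_append)
  ultimately show ?thesis
    by (simp add: cut_prunes_def)
qed

lemma coprod_Nil: "coprod [] = [([], [])]"
  by (simp add: coprod_def)

lemma coprod_Cons:
  "coprod (t # ts) =
    map (\<lambda>(a, b). (fst a @ fst b, snd a @ snd b)) (List.product (tree_cuts t) (coprod ts))"
  by (simp add: coprod_def product_concat_map map_concat comp_def split_def)

lemma tree_cuts_Node: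
  "tree_cuts (Node d cs) = ([Node d cs], []) # map (\<lambda>(p, rs). (p, [Node d rs])) (coprod cs)"
  by (simp add: coprod_def split_def comp_def tree_cuts_def [abs_def])

lemma haut_upsets_vertices_Node:
  "haut_upsets (vertices [Node d cs]) = insert (vertices [Node d cs]) (image (Cons 0) ` haut_upsets (vertices cs))"
proof -
  have "haut_upsets (Cons 0 ` vertices cs) = image (Cons 0) ` haut_upsets (vertices cs)"
    by (rule haut_upsets_image) auto
  then show ?thesis
    unfolding vertices_Node by (subst haut_upsets_graft) (auto dest: vertex_ne_Nil)
qed

lemma rel_enum_tree_cuts:
  assumes "rel_enum (cut_prunes cs) (coprod cs) (haut_upsets (vertices cs))"
  shows "rel_enum (cut_prunes [Node d cs]) (tree_cuts (Node d cs)) (haut_upsets (vertices [Node d cs]))"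
  unfolding tree_cuts_Node haut_upsets_vertices_Node
proof (rule rel_enum_Cons)
  show "cut_prunes [Node d cs] ([Node d cs], []) (vertices [Node d cs])"
    by (rule cut_prunes_total)
  have "[0] \<notin> Cons 0 ` A" if "A \<in> haut_upsets (vertices cs)" for A
    using that by (auto simp: haut_upsets_def)
  moreover have "[0] \<in> vertices [Node d cs]"
    by simp
  ultimately show "vertices [Node d cs] \<notin> image (Cons 0) ` haut_upsets (vertices cs)"
    by blast
  show "rel_enum (cut_prunes [Node d cs]) (map (\<lambda>(p, rs). (p, [Node d rs])) (coprod cs))
      (image (Cons 0) ` haut_upsets (vertices cs))"
  proof (rule rel_enum_map [OF assms])
    show "inj_on (image (Cons 0)) (haut_upsets (vertices cs))"
      by (rule inj_on_image) (simp add: inj_on_def)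
    fix c A assume "A \<in> haut_upsets (vertices cs)" "cut_prunes cs c A"
    then show "cut_prunes [Node d cs] ((\<lambda>(p, rs). (p, [Node d rs])) c) (Cons 0 ` A)"
      by (cases c) (auto simp: haut_upsets_def intro: cut_prunes_graft)
  qed
qed

lemma rel_enum_coprod: "rel_enum (cut_prunes G) (coprod G) (haut_upsets (vertices G))"
proof (induction G rule: measure_induct_rule [of "size_list size"])
  case (less G)
  show ?case
  proof (cases G)
    case Nil
    have "haut_upsets {} = {{}}"
      by (auto simp: haut_upsets_def)
    then show ?thesis
      using Nil by (simp add: coprod_Nil rel_enum_singleton cut_prunes_def vertex_iso_empty)
  next
    case (Cons t ts)
    obtain d cs where t: "t = Node d cs" by (cases t)
    have "rel_enum (cut_prunes [t]) (tree_cuts t) (haut_upsets (vertices [t]))"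
      unfolding t by (rule rel_enum_tree_cuts, rule less) (simp add: Cons t)
    moreover have "rel_enum (cut_prunes ts) (coprod ts) (haut_upsets (vertices ts))"
      by (rule less) (simp add: Cons t)
    ultimately have "rel_enum (rel_prod (cut_prunes [t]) (cut_prunes ts))
        (List.product (tree_cuts t) (coprod ts)) (haut_upsets (vertices [t]) \<times> haut_upsets (vertices ts))"
      by (rule rel_enum_product)
    then have "rel_enum (cut_prunes (t # ts)) (coprod (t # ts))
        ((\<lambda>(A, B). A \<union> shift (length [t]) ` B) ` (haut_upsets (vertices [t]) \<times> haut_upsets (vertices ts)))"
      unfolding coprod_Cons
    proof (rule rel_enum_map)
      show "inj_on (\<lambda>(A, B). A \<union> shift (length [t]) ` B) (haut_upsets (vertices [t]) \<times> haut_upsets (vertices ts))"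
        by (rule inj_on_haut_upsets_vertices_append)
      fix c x assume "x \<in> haut_upsets (vertices [t]) \<times> haut_upsets (vertices ts)"
        and "rel_prod (cut_prunes [t]) (cut_prunes ts) c x"
      then show "cut_prunes (t # ts) ((\<lambda>(a, b). (fst a @ fst b, snd a @ snd b)) c)
          ((\<lambda>(A, B). A \<union> shift (length [t]) ` B) x)"
        using cut_prunes_append [of "[t]" _ _ _ ts] by (auto simp: haut_upsets_def elim!: rel_prod.cases)
    qed
    then show ?thesis
      using haut_upsets_vertices_append [of "[t]" ts] Cons by simp
  qed
qed


section \<open>The counting function satisfies the defining identities of the pairing\<close>

lemma card_I_set_Nil: "card (I_set [] G) = (if G = [] then 1 else 0)"
proof (cases "G = []")
  case True
  then have "I_set [] G = {\<lambda>_. undefined}"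
    by (auto simp: I_set_eq_I_betw I_betw_def bij_betw_def)
  with True show ?thesis
    by simp
next
  case False
  then have "[0] \<in> vertices G"
    by simp
  then have "vertices G \<noteq> {}"
    by blast
  then have "I_set [] G = {}"
    by (auto simp: I_set_eq_I_betw I_betw_def bij_betw_def)
  with False show ?thesis
    by simp
qed

lemma card_I_set_append:
  "card (I_set (F1 @ F2) G) = (\<Sum>(P, R) \<leftarrow> coprod G. card (I_set F1 P) * card (I_set F2 R))"
proof -
  let ?V2 = "shift (length F1) ` vertices F2" and ?D = "decoration (F1 @ F2)"
  let ?W = "vertices G" and ?E = "decoration G"
  have "card (I_set (F1 @ F2) G) =
      (\<Sum>A\<in>haut_upsets ?W. card (I_betw (vertices F1) ?D A ?E) * card (I_betw ?V2 ?D (?W - A) ?E))"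
    unfolding I_set_eq_I_betw vertices_append
    by (rule card_I_betw_Un) (simp_all add: finite_vertices left_of_vertices_append)
  also have "\<dots> = (\<Sum>(P, R) \<leftarrow> coprod G. card (I_set F1 P) * card (I_set F2 R))"
  proof (rule sum_list_rel_enum [OF rel_enum_coprod, symmetric])
    fix c A assume "A \<in> haut_upsets ?W" and cut: "cut_prunes G c A"
    obtain P R where c: "c = (P, R)" by (cases c)
    have "finite A" "finite (?W - A)"
      using \<open>A \<in> haut_upsets ?W\<close> finite_vertices [of G]
      by (auto simp: haut_upsets_def intro: finite_subset)
    then have "card (I_set F1 P) = card (I_betw (vertices F1) ?D A ?E)"
      "card (I_set F2 R) = card (I_betw ?V2 ?D (?W - A) ?E)"
      using cut c vertex_iso_append_left [of "vertices F1" F1 F2] vertex_iso_append_right [of "vertices F2" F2 F1]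
      by (auto simp: I_set_eq_I_betw cut_prunes_def finite_vertices
          intro!: card_I_betw_iso dest: vertex_iso_sym)
    with c show "(case c of (P, R) \<Rightarrow> card (I_set F1 P) * card (I_set F2 R)) =
        card (I_betw (vertices F1) ?D A ?E) * card (I_betw ?V2 ?D (?W - A) ?E)"
      by simp
  qed
  finally show ?thesis .
qed

lemma gauche_least_vertex:
  assumes "m \<in> vertices G" and least: "\<And>w. w \<in> vertices G \<Longrightarrow> gauche_path_ge w m"
  shows "m = [length G - 1]"
proof -
  obtain i p where m: "m = i # p" and "i < length G"
    using assms(1) by (cases m) (auto simp: vertices_def)
  then have "gauche_path_ge [i] (i # p)"
    using least [of "[i]"] by simp
  then have "p = []"
    by simp
  have "j \<le> i" if "j < length G" for j
    using least [of "[j]"] that m by (auto split: if_splits)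
  then have "length G - 1 \<le> i"
    using \<open>i < length G\<close> by simp
  with \<open>i < length G\<close> m \<open>p = []\<close> show ?thesis
    by simp
qed

lemma I_set_Node_root_image:
  assumes f: "f \<in> I_set [Node d F] G"
  shows "f [0] = [length G - 1]"
proof (rule gauche_least_vertex)
  note f_props = I_betwD [OF f [unfolded I_set_eq_I_betw]]
  show "f [0] \<in> vertices G"
    by (rule PiE_mem [OF f_props(1)]) simp
  fix w assume "w \<in> vertices G"
  then obtain x where "x \<in> vertices [Node d F]" "f x = w"
    by (rule I_betw_surj [OF f [unfolded I_set_eq_I_betw]])
  moreover from this have "prefix [0] x"
    by (auto simp: vertices_Node)
  ultimately show "gauche_path_ge w (f [0])"
    using f_props(3) [of x "[0]"] by simp
qed

lemma I_set_Node_last: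
  assumes f: "f \<in> I_set [Node d F] G"
  shows "G \<noteq> [] \<and> last G = Node d []"
proof -
  note f_props = I_betwD [OF f [unfolded I_set_eq_I_betw]]
  let ?i = "length G - 1"
  have root: "[0] \<in> vertices [Node d F]" and f_root: "f [0] = [?i]"
    using I_set_Node_root_image [OF f] by simp_all
  then have "[?i] \<in> vertices G"
    using PiE_mem [OF f_props(1) root] by simp
  then have "G \<noteq> []"
    by auto
  obtain e cs where last: "G ! ?i = Node e cs"
    by (cases "G ! ?i")
  have "cs = []"
  proof (rule ccontr)
    assume "cs \<noteq> []"
    with last \<open>G \<noteq> []\<close> have "[?i, 0] \<in> vertices G"
      by (simp add: vertices_def)
    then obtain x where x: "x \<in> vertices [Node d F]" "f x = [?i, 0]"
      by (rule I_betw_surj [OF f [unfolded I_set_eq_I_betw]])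
    with f_root have "x \<noteq> [0]"
      by auto
    with x(1) obtain v where "x = 0 # v" "v \<noteq> []"
      by (auto simp: vertices_Node)
    moreover have "gauche_path_ge x [0]"
      using f_props(4) [OF x(1) root] f_root x(2) by simp
    ultimately show False
      by simp
  qed
  moreover have "e = d"
    using f_props(5) [OF root] f_root last \<open>G \<noteq> []\<close> by simp
  ultimately show ?thesis
    using last \<open>G \<noteq> []\<close> by (simp add: last_conv_nth)
qed

lemma card_I_betw_singleton:
  assumes "v \<noteq> []" "w \<noteq> []" "E w = D v"
  shows "card (I_betw {v} D {w} E) = 1"
proof -
  have "I_betw {v} D {w} E = {restrict (\<lambda>_. w) {v}}"
    using assms by (auto simp: I_betw_def PiE_iff extensional_def bij_betw_def gauche_path_ge_refl)
  then show ?thesis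
    by simp
qed

lemma cross_compatible_root:
  assumes "[] \<notin> V"
  shows "cross_compatible {[0]} (Cons 0 ` V) {[length G]} (vertices G)"
  unfolding cross_compatible_def
proof (intro ballI)
  fix x y a b :: "nat list" assume "x \<in> {[0]}" "y \<in> Cons 0 ` V" "a \<in> {[length G]}" "b \<in> vertices G"
  moreover from \<open>y \<in> Cons 0 ` V\<close> obtain v where "y = 0 # v" "v \<noteq> []"
    using assms by auto
  moreover from \<open>b \<in> vertices G\<close> obtain j q where "b = j # q" "j < length G"
    by (rule vertexE)
  ultimately show "(prefix y x \<longrightarrow> gauche_path_ge a b) \<and> (prefix x y \<longrightarrow> gauche_path_ge b a) \<and>
      (prefix b a \<longrightarrow> gauche_path_ge x y) \<and> (prefix a b \<longrightarrow> gauche_path_ge y x)"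
    by auto
qed

lemma card_I_set_graft:
  "card (I_set [Node d F] (G @ [Node d []])) = card (I_set F G)"
proof -
  let ?V = "Cons 0 ` vertices F" and ?n = "length G"
  let ?D = "decoration [Node d F]" and ?E = "decoration (G @ [Node d []])"
  have V: "vertices [Node d F] = {[0]} \<union> ?V"
    by (simp add: vertices_Node)
  have W: "vertices (G @ [Node d []]) = {[?n]} \<union> vertices G"
    by (auto simp: vertices_append vertices_Node)
  have "f ` {[0]} = {[?n]}" if "f \<in> I_set [Node d F] (G @ [Node d []])" for f
    using I_set_Node_root_image [OF that] by simp
  then have "I_set [Node d F] (G @ [Node d []]) =
      {f \<in> I_betw ({[0]} \<union> ?V) ?D ({[?n]} \<union> vertices G) ?E. f ` {[0]} = {[?n]}}"
    unfolding I_set_eq_I_betw V W by blast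
  then have "card (I_set [Node d F] (G @ [Node d []])) =
      card {f \<in> I_betw ({[0]} \<union> ?V) ?D ({[?n]} \<union> vertices G) ?E. f ` {[0]} = {[?n]}}"
    by (rule arg_cong)
  also have "\<dots> = card (I_betw {[0]} ?D {[?n]} ?E) * card (I_betw ?V ?D (vertices G) ?E)"
  proof (rule card_I_betw_glue)
    show "{[0]} \<inter> ?V = {}" "{[?n]} \<inter> vertices G = {}"
      by (auto elim: vertexE dest: vertex_ne_Nil)
    show "cross_compatible {[0]} ?V {[?n]} (vertices G)"
      by (rule cross_compatible_root) simp
  qed
  also have "card (I_betw {[0]} ?D {[?n]} ?E) = 1"
    using decoration_append_right [of "[0]" "[Node d []]" G] by (intro card_I_betw_singleton) simp_all
  also have "card (I_betw ?V ?D (vertices G) ?E) = card (I_set F G)"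
    unfolding I_set_eq_I_betw
  proof (rule card_I_betw_iso)
    show "vertex_iso ?V ?D (vertices F) (decoration F)"
      by (rule vertex_iso_sym, rule vertex_iso_image_Cons) (auto dest: vertex_ne_Nil)
    show "vertex_iso (vertices G) ?E (vertices G) (decoration G)"
      by (rule vertex_iso_sym, rule vertex_iso_append_left) simp
  qed (simp_all add: finite_vertices)
  finally show ?thesis
    by simp
qed

lemma card_I_set_Node:
  "card (I_set [Node d F] G) = (case gamma d G of None \<Rightarrow> 0 | Some G' \<Rightarrow> card (I_set F G'))"
proof (cases "G \<noteq> [] \<and> last G = Node d []")
  case True
  then obtain G' where "G = G' @ [Node d []]"
    by (metis append_butlast_last_id)
  then show ?thesis
    by (simp add: gamma_def card_I_set_graft)
next
  case False
  then have "I_set [Node d F] G = {}"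
    using I_set_Node_last [of _ d F G] by blast
  with False show ?thesis
    by (auto simp: gamma_def)
qed

lemma is_pairing_card_I_set: "is_pairing (\<lambda>F G. of_nat (card (I_set F G)))"
  unfolding is_pairing_def
  by (simp add: card_I_set_Nil counit_def card_I_set_append card_I_set_Node sum_list_of_nat [symmetric]
      comp_def split_def split: option.split)

lemma is_pairing_unique:
  assumes "is_pairing p" "is_pairing q"
  shows "p = q"
proof (intro ext)
  fix F G
  show "p F G = q F G"
  proof (induction F arbitrary: G rule: measure_induct_rule [of "size_list size"])
    case (less F)
    show ?case
    proof (cases F rule: rev_cases)
      case Nil
      then show ?thesis
        using assms by (simp add: is_pairing_def)
    next
      case (snoc F' t)
      obtain d cs where t: "t = Node d cs"
        by (cases t)
      show ?thesis
      proof (cases "F' = []")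
        case True
        have "p cs G' = q cs G'" for G'
          by (rule less) (simp add: snoc t True)
        then show ?thesis
          using assms True snoc t by (simp add: is_pairing_def split: option.split)
      next
        case False
        have "0 < size_list size F'"
          using False by (cases F') auto
        then have "p F' G' = q F' G'" "p [t] G' = q [t] G'" for G'
          by (auto intro!: less simp: snoc t)
        then show ?thesis
          using assms snoc by (simp add: is_pairing_def)
      qed
    qed
  qed
qed

lemma pairing_eq_card_I_set: "pairing = (\<lambda>F G. of_nat (card (I_set F G)))"
  unfolding pairing_def
  by (rule the_equality) (simp_all add: is_pairing_card_I_set is_pairing_unique)

theorem mainTheorem6:
  fixes F G :: "'d pforest"
  shows "pairing F G = of_nat (card (I_set F G))"
  by (simp add: pairing_eq_card_I_set)

end
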